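(* Let $\mathcal A=\{a_1,\dots,a_n\}\subset\mathbb Z^d$ with $n\ge d+2$ and $d$-dimensional convex hull, and let $\Delta_1,\Delta_2$ be two $d$-simplices of $\mathcal A$ which share a facet. Then there exists a regular subdivision of $\mathcal A$ containing $\Delta_1$ and $\Delta_2$, so the cone $\mathcal C_{\Delta_1,\Delta_2}$ is nonempty. Moreover, there exists a regular triangulation of $\mathcal A$ containing both simplices.
   Context: A $d$-simplex of $\mathcal A$ is a subset of $d+1$ affinely independent points. Two $d$-simplices share a facet if the intersection of their convex hulls is a facet (codimension-one face) of both. Regular subdivisions: for $h\in\mathbb R^n$, lift $a_j$ to $(a_j,h_j)\in\mathbb R^{d+1}$; lower faces of the convex hull of the lifted points are those with an inner normal of positive last coordinate; each lower face $F$ gives the cell $\{a_j:(a_j,h_j)\in F\}$; the collection of cells is the regular subdivision induced by $h$. It contains a simplex if that simplex is one of its cells. $\mathcal C_{\Delta_1,\Delta_2}$ is the set of $h\in\mathbb R^n$ inducing a regular subdivision containing $\Delta_1$ and $\Delta_2$. A regular triangulation is a regular subdivision each of whose cells consists of affinely independent points which are exactly the vertices of its convex hull. *)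

theory Defs
  imports "HOL-Analysis.Analysis"
begin

text \<open>Point configurations are finite sets of points of \<open>real^'d\<close>; a height vector
  \<open>h \<in> \<real>^n\<close> is a function assigning the height \<open>h a\<close> to each point \<open>a\<close> of the configuration
  (values outside the configuration are irrelevant).\<close>

definition lift :: "(real^'d) set \<Rightarrow> (real^'d \<Rightarrow> real) \<Rightarrow> ((real^'d) \<times> real) set" where
  "lift A h = (\<lambda>a. (a, h a)) ` A"

definition lower_face :: "(real^'d) set \<Rightarrow> (real^'d \<Rightarrow> real) \<Rightarrow> ((real^'d) \<times> real) set \<Rightarrow> bool" where
  "lower_face A h F \<longleftrightarrow> F face_of convex hull (lift A h) \<and> F \<noteq> {} \<and>
     (\<exists>w :: (real^'d) \<times> real. snd w > 0 \<and>
        F = {p \<in> convex hull (lift A h). \<forall>q \<in> convex hull (lift A h). w \<bullet> p \<le> w \<bullet> q})"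

definition cell_of :: "(real^'d) set \<Rightarrow> (real^'d \<Rightarrow> real) \<Rightarrow> ((real^'d) \<times> real) set \<Rightarrow> (real^'d) set" where
  "cell_of A h F = {a \<in> A. (a, h a) \<in> F}"

definition regular_subdivision :: "(real^'d) set \<Rightarrow> (real^'d \<Rightarrow> real) \<Rightarrow> (real^'d) set set" where
  "regular_subdivision A h = {cell_of A h F | F. lower_face A h F}"

definition regular_triangulation :: "(real^'d) set \<Rightarrow> (real^'d \<Rightarrow> real) \<Rightarrow> bool" where
  "regular_triangulation A h \<longleftrightarrow>
     (\<forall>C \<in> regular_subdivision A h. \<not> affine_dependent C \<and> {x. x extreme_point_of convex hull C} = C)"

definition d_simplex_of :: "(real^'d) set \<Rightarrow> (real^'d) set \<Rightarrow> bool" where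
  "d_simplex_of A S \<longleftrightarrow> S \<subseteq> A \<and> card S = CARD('d) + 1 \<and> \<not> affine_dependent S"

definition is_facet :: "'a::euclidean_space set \<Rightarrow> 'a set \<Rightarrow> bool" where
  "is_facet F P \<longleftrightarrow> F face_of P \<and> aff_dim F = aff_dim P - 1"

definition share_facet :: "(real^'d) set \<Rightarrow> (real^'d) set \<Rightarrow> bool" where
  "share_facet S1 S2 \<longleftrightarrow>
     is_facet (convex hull S1 \<inter> convex hull S2) (convex hull S1) \<and>
     is_facet (convex hull S1 \<inter> convex hull S2) (convex hull S2)"

definition cone_C :: "(real^'d) set \<Rightarrow> (real^'d) set \<Rightarrow> (real^'d) set \<Rightarrow> (real^'d \<Rightarrow> real) set" where
  "cone_C A S1 S2 = {h. S1 \<in> regular_subdivision A h \<and> S2 \<in> regular_subdivision A h}"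

end

theory Submission
  imports Defs "HOL-Computational_Algebra.Polynomial"
begin

(* Write S1 = T + r and S2 = T + s and let u.x = b be the hyperplane spanned by the common facet T;
   sharing a facet forces r and s strictly to opposite sides of it. The folded heights |u.x - b| are
   affine on S1 and on S2, so lifting every other point a strictly above its folded height makes S1
   and S2 lower cells. Lift a to |u.a - b| + t^k with a different exponent k for each such point:
   an affine dependency inside a cell on which the heights are affine then either involves a lifted
   point, which makes t a root of a nonzero polynomial, or lives on T, r, s, where the fold is not
   affine. Avoiding the finitely many roots gives a regular triangulation. *)

definition affine_on :: "'a::real_inner set \<Rightarrow> ('a \<Rightarrow> real) \<Rightarrow> bool" where
  "affine_on D h \<longleftrightarrow> (\<exists>v c. \<forall>a\<in>D. h a = v \<bullet> a + c)"

lemma affine_on_subset: "affine_on D h \<Longrightarrow> D' \<subseteq> D \<Longrightarrow> affine_on D' h"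
  unfolding affine_on_def by blast

lemma affine_on_cong: "(\<And>a. a \<in> D \<Longrightarrow> h a = h' a) \<Longrightarrow> affine_on D h \<longleftrightarrow> affine_on D h'"
  unfolding affine_on_def by simp

lemma affine_on_dependency:
  assumes "affine_on D h" and "sum W D = 0" and "(\<Sum>a\<in>D. W a *\<^sub>R a) = 0"
  shows "(\<Sum>a\<in>D. W a * h a) = 0"
proof -
  obtain v c where h: "\<forall>a\<in>D. h a = v \<bullet> a + c"
    using assms(1) unfolding affine_on_def by blast
  have "(\<Sum>a\<in>D. W a * h a) = (\<Sum>a\<in>D. v \<bullet> (W a *\<^sub>R a) + c * W a)"
    using h by (intro sum.cong) (auto simp: algebra_simps)
  also have "\<dots> = v \<bullet> (\<Sum>a\<in>D. W a *\<^sub>R a) + c * sum W D"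
    by (simp add: sum.distrib inner_sum_right sum_distrib_left)
  finally show ?thesis using assms(2,3) by simp
qed

lemma cell_in_regular_subdivision:
  fixes A S :: "(real^'d) set" and v :: "real^'d" and h :: "real^'d \<Rightarrow> real"
  assumes "finite A" and SA: "S \<subseteq> A" and "S \<noteq> {}"
    and onS: "\<forall>a\<in>S. h a - v \<bullet> a = c" and offS: "\<forall>a\<in>A - S. h a - v \<bullet> a > c"
  shows "S \<in> regular_subdivision A h"
proof -
  define w where "w = (-v, 1::real)"
  have w_lift: "w \<bullet> (a, h a) = h a - v \<bullet> a" for a by (simp add: w_def)
  define K where "K = convex hull (lift A h)"
  have lift_in_K: "(a, h a) \<in> K" if "a \<in> A" for a
    unfolding K_def lift_def using that by (intro hull_inc) auto
  have "lift A h \<subseteq> {q. w \<bullet> q \<ge> c}"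
    using onS offS by (force simp: lift_def w_lift)
  then have K_above: "K \<subseteq> {q. w \<bullet> q \<ge> c}"
    unfolding K_def by (intro hull_minimal) (auto simp: convex_halfspace_ge)
  obtain a0 where a0: "a0 \<in> S" using \<open>S \<noteq> {}\<close> by auto
  then have a0_on: "(a0, h a0) \<in> K \<inter> {p. w \<bullet> p = c}"
    using SA lift_in_K onS w_lift by auto
  define F where "F = {p\<in>K. \<forall>q\<in>K. w \<bullet> p \<le> w \<bullet> q}"
  have F_eq: "F = K \<inter> {p. w \<bullet> p = c}"
  proof
    show "F \<subseteq> K \<inter> {p. w \<bullet> p = c}"
      using K_above a0_on unfolding F_def by fastforce
    show "K \<inter> {p. w \<bullet> p = c} \<subseteq> F"
      using K_above unfolding F_def by force
  qed
  have "lower_face A h F"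
    unfolding lower_face_def
  proof (intro conjI exI)
    show "F face_of convex hull lift A h"
      unfolding F_eq K_def
      by (rule face_of_Int_supporting_hyperplane_ge) (use K_above K_def in auto)
    show "F \<noteq> {}" using F_eq a0_on by auto
    show "snd w > 0" by (simp add: w_def)
    show "F = {p \<in> convex hull (lift A h). \<forall>q \<in> convex hull (lift A h). w \<bullet> p \<le> w \<bullet> q}"
      by (simp add: F_def K_def)
  qed
  moreover have "cell_of A h F = S"
    unfolding cell_of_def F_eq using lift_in_K onS offS SA w_lift by force
  ultimately show ?thesis unfolding regular_subdivision_def by blast
qed

lemma regular_subdivision_cell_affine_on:
  fixes A C :: "(real^'d) set"
  assumes "C \<in> regular_subdivision A h"
  shows "affine_on C h"
proof -
  obtain F where "lower_face A h F" and C: "C = cell_of A h F"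
    using assms unfolding regular_subdivision_def by auto
  then obtain w :: "(real^'d) \<times> real" where w: "snd w > 0"
    and F: "F = {p \<in> convex hull (lift A h). \<forall>q \<in> convex hull (lift A h). w \<bullet> p \<le> w \<bullet> q}"
    unfolding lower_face_def by blast
  have level: "w \<bullet> (a, h a) = w \<bullet> (a', h a')" if "a \<in> C" "a' \<in> C" for a a'
    using that unfolding C cell_of_def F by (auto intro: order_antisym)
  show ?thesis
  proof (cases "C = {}")
    case False
    then obtain a0 where a0: "a0 \<in> C" by auto
    have "h a = (- (1 / snd w)) *\<^sub>R fst w \<bullet> a + w \<bullet> (a0, h a0) / snd w" if "a \<in> C" for a
      using level[OF that a0] w by (cases w) (simp add: field_simps, metis distrib_left)
    then show ?thesis unfolding affine_on_def by blast
  qed (simp add: affine_on_def)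
qed

lemma regular_triangulation_if_not_affine_on_dependent:
  assumes "\<forall>D\<subseteq>A. affine_dependent D \<longrightarrow> \<not> affine_on D h"
  shows "regular_triangulation A h"
  unfolding regular_triangulation_def
proof
  fix C assume C: "C \<in> regular_subdivision A h"
  then have "C \<subseteq> A" unfolding regular_subdivision_def cell_of_def by auto
  then have "\<not> affine_dependent C"
    using assms regular_subdivision_cell_affine_on[OF C] by blast
  then show "\<not> affine_dependent C \<and> {x. x extreme_point_of convex hull C} = C"
    using extreme_point_of_convex_hull_affine_independent by blast
qed

lemma folded_heights_cell:
  fixes A T :: "(real^'d) set"
  assumes "finite A" and "insert r T \<subseteq> A"
    and T: "\<forall>t\<in>T. u \<bullet> t = b" and r: "u \<bullet> r \<ge> b" and s: "u \<bullet> s < b"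
    and folded: "\<forall>z\<in>insert r (insert s T). h z = \<bar>u \<bullet> z - b\<bar>"
    and above: "\<forall>a\<in>A - insert r (insert s T). h a > \<bar>u \<bullet> a - b\<bar>"
  shows "insert r T \<in> regular_subdivision A h"
proof (rule cell_in_regular_subdivision[where v = u and c = "- b"])
  show "\<forall>a\<in>insert r T. h a - u \<bullet> a = - b" using folded T r by auto
  show "\<forall>a\<in>A - insert r T. h a - u \<bullet> a > - b"
  proof
    fix a assume a: "a \<in> A - insert r T"
    show "h a - u \<bullet> a > - b"
    proof (cases "a = s")
      case True then show ?thesis using folded s by auto
    next
      case False
      then have "h a > \<bar>u \<bullet> a - b\<bar>" using above a by blast
      then show ?thesis by linarith
    qed
  qed
qed (use assms in auto)

lemma folded_heights_cells:
  fixes A T :: "(real^'d) set"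
  assumes "finite A" and "insert r T \<subseteq> A" and "insert s T \<subseteq> A"
    and T: "\<forall>t\<in>T. u \<bullet> t = b" and r: "u \<bullet> r > b" and s: "u \<bullet> s < b"
    and folded: "\<forall>z\<in>insert r (insert s T). h z = \<bar>u \<bullet> z - b\<bar>"
    and above: "\<forall>a\<in>A - insert r (insert s T). h a > \<bar>u \<bullet> a - b\<bar>"
  shows "insert r T \<in> regular_subdivision A h" and "insert s T \<in> regular_subdivision A h"
proof -
  show "insert r T \<in> regular_subdivision A h"
    using folded_heights_cell[OF assms(1,2) T] r s folded above by simp
  have flip: "\<bar>(- u) \<bullet> x - - b\<bar> = \<bar>u \<bullet> x - b\<bar>" for x
    by (simp add: abs_minus_commute)
  show "insert s T \<in> regular_subdivision A h"
  proof (rule folded_heights_cell[OF assms(1,3), of "- u" "- b" r])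
    show "\<forall>z\<in>insert s (insert r T). h z = \<bar>(- u) \<bullet> z - - b\<bar>"
      unfolding flip using folded by blast
    show "\<forall>a\<in>A - insert s (insert r T). h a > \<bar>(- u) \<bullet> a - - b\<bar>"
      unfolding flip using above by blast
  qed (use T r s in auto)
qed

lemma finite_affine_on_perturbation_parameters:
  fixes D Z :: "'a::real_inner set" and f :: "'a \<Rightarrow> real" and idx :: "'a \<Rightarrow> nat"
  assumes "finite D" and "affine_dependent D" and inj: "inj_on idx (D - Z)"
    and generic: "\<forall>D'\<subseteq>Z. affine_dependent D' \<longrightarrow> \<not> affine_on D' f"
  shows "finite {t. affine_on D (\<lambda>a. f a + (if a \<in> Z then 0 else t ^ Suc (idx a)))}"
    (is "finite {t. affine_on D (?h t)}")
proof -
  obtain U where U_sum: "sum U D = 0" and U_nz: "\<exists>v\<in>D. U v \<noteq> 0"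
    and U_vec: "(\<Sum>v\<in>D. U v *\<^sub>R v) = 0"
    using assms(1,2) affine_dependent_explicit_finite by blast
  show ?thesis
  proof (cases "\<forall>a\<in>D - Z. U a = 0")
    case True
    have "sum U (D \<inter> Z) = sum U D" "(\<Sum>v\<in>D \<inter> Z. U v *\<^sub>R v) = (\<Sum>v\<in>D. U v *\<^sub>R v)"
      using True \<open>finite D\<close> by (intro sum.mono_neutral_left; auto)+
    moreover have "\<exists>v\<in>D \<inter> Z. U v \<noteq> 0" using U_nz True by blast
    ultimately have "affine_dependent (D \<inter> Z)"
      using U_sum U_vec \<open>finite D\<close> affine_dependent_explicit_finite[of "D \<inter> Z"] by auto
    then have "\<not> affine_on (D \<inter> Z) (?h t)" for t
      using generic affine_on_cong[of "D \<inter> Z" f "?h t"] by auto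
    then have "{t. affine_on D (?h t)} = {}" using affine_on_subset by blast
    then show ?thesis by simp
  next
    case False
    then obtain x where x: "x \<in> D - Z" "U x \<noteq> 0" by blast
    define p where "p = [:\<Sum>a\<in>D. U a * f a:] + (\<Sum>a\<in>D - Z. monom (U a) (Suc (idx a)))"
    have poly_p: "poly p t = (\<Sum>a\<in>D. U a * ?h t a)" for t
    proof -
      have "(\<Sum>a\<in>D. U a * ?h t a)
          = (\<Sum>a\<in>D. U a * f a + (if a \<in> Z then 0 else U a * t ^ Suc (idx a)))"
        by (intro sum.cong) (auto simp: algebra_simps)
      also have "\<dots> = (\<Sum>a\<in>D. U a * f a) + (\<Sum>a\<in>D - Z. U a * t ^ Suc (idx a))"
        using \<open>finite D\<close> by (simp add: sum.distrib sum.If_cases Diff_eq)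
      finally show ?thesis by (simp add: p_def poly_sum poly_monom)
    qed
    have "coeff p (Suc (idx x)) = (\<Sum>a\<in>D - Z. if Suc (idx a) = Suc (idx x) then U a else 0)"
      by (simp add: p_def coeff_sum coeff_monom)
    also have "\<dots> = (\<Sum>a\<in>D - Z. if a = x then U a else 0)"
      using inj x(1) by (intro sum.cong) (auto simp: inj_on_eq_iff)
    also have "\<dots> = U x" using x(1) \<open>finite D\<close> by simp
    finally have "p \<noteq> 0" using x(2) by auto
    have "{t. affine_on D (?h t)} \<subseteq> {t. poly p t = 0}"
      using affine_on_dependency[OF _ U_sum U_vec] poly_p by auto
    then show ?thesis using poly_roots_finite[OF \<open>p \<noteq> 0\<close>] finite_subset by blast
  qed
qed

lemma exists_perturbation_not_affine_on_dependent:
  fixes A Z :: "'a::real_inner set" and f :: "'a \<Rightarrow> real"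
  assumes "finite A" and generic: "\<forall>D\<subseteq>Z. affine_dependent D \<longrightarrow> \<not> affine_on D f"
  obtains h where "\<forall>z\<in>Z. h z = f z" and "\<forall>a\<in>A - Z. h a > f a"
    and "\<forall>D\<subseteq>A. affine_dependent D \<longrightarrow> \<not> affine_on D h"
proof -
  obtain idx :: "'a \<Rightarrow> nat" where inj: "inj_on idx (A - Z)"
    using finite_imp_inj_to_nat_seg[of "A - Z"] \<open>finite A\<close> by blast
  define h where "h t a = f a + (if a \<in> Z then 0 else t ^ Suc (idx a))" for t :: real and a
  define bad where "bad = (\<Union>D\<in>{D. D \<subseteq> A \<and> affine_dependent D}. {t. affine_on D (h t)})"
  have "finite {D. D \<subseteq> A \<and> affine_dependent D}"
    using \<open>finite A\<close> by (rule rev_finite_subset[OF finite_Pow_iff[THEN iffD2]]) auto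
  moreover have "finite {t. affine_on D (h t)}" if "D \<subseteq> A" "affine_dependent D" for D
    unfolding h_def
    using that finite_subset[OF that(1) \<open>finite A\<close>] inj_on_subset[OF inj, of "D - Z"] generic
    by (intro finite_affine_on_perturbation_parameters) auto
  ultimately have "finite bad" unfolding bad_def by blast
  then obtain t :: real where "t > 0" "t \<notin> bad"
    using infinite_imp_nonempty[OF Diff_infinite_finite[OF _ infinite_Ioi[of 0]]] by auto
  show thesis
  proof (rule that[of "h t"])
    show "\<forall>a\<in>A - Z. h t a > f a" using \<open>t > 0\<close> by (simp add: h_def)
    show "\<forall>D\<subseteq>A. affine_dependent D \<longrightarrow> \<not> affine_on D (h t)"
      using \<open>t \<notin> bad\<close> unfolding bad_def by blast
  qed (simp add: h_def)
qed

lemma affine_independent_insert_off_hyperplane: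
  fixes S :: "'a::euclidean_space set"
  assumes "\<not> affine_dependent S" and "\<forall>x\<in>S. w \<bullet> x = c" and "w \<bullet> a \<noteq> c"
  shows "\<not> affine_dependent (insert a S)"
proof -
  have "affine hull S \<subseteq> {x. w \<bullet> x = c}"
    using assms(2) by (intro hull_minimal) (auto simp: affine_hyperplane)
  then show ?thesis using assms(1,3) affine_independent_insert by blast
qed

lemma abs_functional_not_affine_on_dependent:
  fixes u :: "'a::euclidean_space"
  assumes indep_r: "\<not> affine_dependent (insert r T)" and indep_s: "\<not> affine_dependent (insert s T)"
    and T: "\<forall>t\<in>T. u \<bullet> t = b" and r: "u \<bullet> r \<ge> b" and s: "u \<bullet> s < b"
  shows "\<forall>D\<subseteq>insert r (insert s T). affine_dependent D \<longrightarrow> \<not> affine_on D (\<lambda>x. \<bar>u \<bullet> x - b\<bar>)"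
proof (intro allI impI notI)
  fix D assume D: "D \<subseteq> insert r (insert s T)" and dep: "affine_dependent D"
    and "affine_on D (\<lambda>x. \<bar>u \<bullet> x - b\<bar>)"
  then obtain v c where vc: "\<forall>x\<in>D. \<bar>u \<bullet> x - b\<bar> = v \<bullet> x + c"
    unfolding affine_on_def by blast
  have rest: "D - {s} \<subseteq> insert r T" using D by auto
  have "s \<in> D"
  proof (rule ccontr)
    assume "s \<notin> D"
    then have "D \<subseteq> insert r T" using rest by auto
    then show False using dep indep_r affine_dependent_subset by blast
  qed
  have "\<not> affine_dependent (D - {s})" using indep_r rest affine_dependent_subset by blast
  moreover have "\<forall>x\<in>D - {s}. (v - u) \<bullet> x = - b - c"
  proof
    fix x assume x: "x \<in> D - {s}"
    have "u \<bullet> x \<ge> b" using rest x T r by auto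
    then have "u \<bullet> x - b = v \<bullet> x + c" using vc x by auto
    then show "(v - u) \<bullet> x = - b - c" by (simp add: inner_diff_left)
  qed
  moreover have "(v - u) \<bullet> s \<noteq> - b - c"
  proof -
    have "b - u \<bullet> s = v \<bullet> s + c" using vc \<open>s \<in> D\<close> s by auto
    then show ?thesis using s by (simp add: inner_diff_left)
  qed
  ultimately have "\<not> affine_dependent (insert s (D - {s}))"
    by (rule affine_independent_insert_off_hyperplane)
  then show False using dep \<open>s \<in> D\<close> by (simp add: insert_absorb)
qed

lemma weighted_mean_in_convex_hull:
  fixes S :: "'a::real_vector set"
  assumes "finite S" and "\<forall>x\<in>S. 0 \<le> w x" and "sum w S > 0"
  shows "(\<Sum>x\<in>S. w x *\<^sub>R x) /\<^sub>R sum w S \<in> convex hull S"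
proof -
  have "(\<Sum>x\<in>S. (w x / sum w S) *\<^sub>R x) \<in> convex hull S"
    using assms by (intro convex_sum) (auto simp: sum_divide_distrib[symmetric] intro: hull_inc)
  then show ?thesis by (simp add: scaleR_sum_right divide_inverse_commute)
qed

lemma opposite_sides_of_common_facet:
  fixes T :: "'a::euclidean_space set"
  assumes "finite T" and "s \<notin> T" and full: "affine hull (insert s T) = UNIV"
    and meet: "convex hull (insert r T) \<inter> convex hull (insert s T) \<subseteq> {x. u \<bullet> x = b}"
    and T: "\<forall>t\<in>T. u \<bullet> t = b" and r: "u \<bullet> r > b"
  shows "u \<bullet> s \<le> b"
proof (rule ccontr)
  assume "\<not> u \<bullet> s \<le> b"
  then have s: "u \<bullet> s > b" by simp
  have "r \<notin> T" using T r by auto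
  have "r \<in> affine hull (insert s T)" using full by simp
  then obtain \<alpha> where "sum \<alpha> (insert s T) = 1" and "(\<Sum>x\<in>insert s T. \<alpha> x *\<^sub>R x) = r"
    using affine_hull_finite[of "insert s T"] \<open>finite T\<close> by auto
  then have \<alpha>_sum: "\<alpha> s + sum \<alpha> T = 1" and \<alpha>_vec: "\<alpha> s *\<^sub>R s + (\<Sum>t\<in>T. \<alpha> t *\<^sub>R t) = r"
    using \<open>finite T\<close> \<open>s \<notin> T\<close> by simp_all
  have "u \<bullet> r = \<alpha> s * (u \<bullet> s) + (\<Sum>t\<in>T. \<alpha> t * (u \<bullet> t))"
    using \<alpha>_vec[symmetric] by (simp add: inner_add_right inner_sum_right)
  also have "(\<Sum>t\<in>T. \<alpha> t * (u \<bullet> t)) = b * sum \<alpha> T"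
    using T by (simp add: sum_distrib_left mult.commute)
  also have "sum \<alpha> T = 1 - \<alpha> s" using \<alpha>_sum by simp
  finally have "u \<bullet> r - b = \<alpha> s * (u \<bullet> s - b)" by (simp add: algebra_simps)
  then have "\<alpha> s > 0" using r s by (metis diff_gt_0_iff_gt zero_less_mult_pos2)
  text \<open>Adding the negative parts of the coordinates of \<open>r\<close> to both sides of
    \<open>r = \<alpha> s s + \<Sum> \<alpha> t t\<close> exhibits a point in both convex hulls strictly above the hyperplane.\<close>
  define \<nu> where "\<nu> t = \<bar>\<alpha> t\<bar> - \<alpha> t" for t
  define p where "p = r + (\<Sum>t\<in>T. \<nu> t *\<^sub>R t)"
  define c where "c = 1 + sum \<nu> T"
  have \<nu>_nonneg: "\<nu> t \<ge> 0" for t by (simp add: \<nu>_def)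
  then have "c > 0" by (simp add: c_def add_pos_nonneg sum_nonneg)
  define w where "w x = (if x = r then 1 else \<nu> x)" for x
  have "sum w T = sum \<nu> T" "(\<Sum>x\<in>T. w x *\<^sub>R x) = (\<Sum>x\<in>T. \<nu> x *\<^sub>R x)"
    using \<open>r \<notin> T\<close> by (auto simp: w_def intro!: sum.cong)
  then have "sum w (insert r T) = c" "(\<Sum>x\<in>insert r T. w x *\<^sub>R x) = p"
    using \<open>finite T\<close> \<open>r \<notin> T\<close> by (simp_all add: w_def c_def p_def)
  then have in_r: "p /\<^sub>R c \<in> convex hull (insert r T)"
    using weighted_mean_in_convex_hull[of "insert r T" w] \<open>finite T\<close> \<open>c > 0\<close> \<nu>_nonneg
    by (simp add: w_def)
  have abs_\<alpha>: "\<bar>\<alpha> t\<bar> = \<alpha> t + \<nu> t" for t by (simp add: \<nu>_def)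
  have "\<nu> s = 0" using \<open>\<alpha> s > 0\<close> by (simp add: \<nu>_def)
  have "sum (\<lambda>x. \<bar>\<alpha> x\<bar>) (insert s T) = c"
    using \<open>finite T\<close> \<open>s \<notin> T\<close> \<open>\<nu> s = 0\<close> \<alpha>_sum by (simp add: abs_\<alpha> sum.distrib c_def)
  moreover have "(\<Sum>x\<in>insert s T. \<bar>\<alpha> x\<bar> *\<^sub>R x) = p"
    using \<open>finite T\<close> \<open>s \<notin> T\<close> \<open>\<nu> s = 0\<close> \<alpha>_vec
    by (simp add: abs_\<alpha> scaleR_add_left sum.distrib p_def algebra_simps)
  ultimately have in_s: "p /\<^sub>R c \<in> convex hull (insert s T)"
    using weighted_mean_in_convex_hull[of "insert s T" "\<lambda>x. \<bar>\<alpha> x\<bar>"] \<open>finite T\<close> \<open>c > 0\<close> by simp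
  have "u \<bullet> p = u \<bullet> r + b * sum \<nu> T"
    using T by (simp add: p_def inner_add_right inner_sum_right sum_distrib_left mult.commute)
  then have "u \<bullet> (p /\<^sub>R c) > b"
    using r \<open>c > 0\<close> by (simp add: c_def field_simps)
  then show False using meet in_r in_s by auto
qed

lemma share_facet_common_facet:
  fixes A S1 S2 :: "(real^'d) set"
  assumes "d_simplex_of A S1" and "d_simplex_of A S2" and "share_facet S1 S2"
  obtains T r s where "S1 = insert r T" and "S2 = insert s T" and "r \<notin> T" and "s \<notin> T"
    and "convex hull S1 \<inter> convex hull S2 = convex hull T"
proof -
  let ?F = "convex hull S1 \<inter> convex hull S2"
  have facet: "?F facet_of convex hull S" and indep: "\<not> affine_dependent S"
    if "S \<in> {S1, S2}" for S
  proof -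
    show indep: "\<not> affine_dependent S" using that assms(1,2) by (auto simp: d_simplex_of_def)
    have "card S = CARD('d) + 1" using that assms(1,2) by (auto simp: d_simplex_of_def)
    then have "aff_dim (convex hull S) = int CARD('d)"
      using aff_dim_affine_independent[OF indep] aff_dim_convex_hull[of S] by simp
    moreover have "is_facet ?F (convex hull S)"
      using that assms(3) unfolding share_facet_def by auto
    ultimately show "?F facet_of convex hull S"
      unfolding is_facet_def facet_of_def by (auto simp: aff_dim_empty[symmetric])
  qed
  obtain r where r: "r \<in> S1" "?F = convex hull (S1 - {r})"
    using facet[of S1] facet_of_convex_hull_affine_independent[OF indep[of S1]] by auto
  obtain s where s: "s \<in> S2" "?F = convex hull (S2 - {s})"
    using facet[of S2] facet_of_convex_hull_affine_independent[OF indep[of S2]] by auto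
  have "\<not> affine_dependent (S1 - {r})" "\<not> affine_dependent (S2 - {s})"
    using indep affine_dependent_subset[of "S1 - {r}" S1] affine_dependent_subset[of "S2 - {s}" S2]
    by auto
  then have "x \<in> S1 - {r} \<longleftrightarrow> x \<in> S2 - {s}" for x
    using extreme_point_of_convex_hull_affine_independent r(2) s(2) by metis
  then have "S2 - {s} = S1 - {r}" by blast
  then show thesis
    using that[of r "S1 - {r}" s] r s by (metis Diff_iff insertCI insert_Diff)
qed

lemma share_facet_opposite_sides:
  fixes A S1 S2 :: "(real^'d) set"
  assumes "d_simplex_of A S1" and "d_simplex_of A S2" and "share_facet S1 S2"
  obtains T r s u b where "S1 = insert r T" and "S2 = insert s T"
    and "\<forall>t\<in>T. u \<bullet> t = b" and "u \<bullet> r > b" and "u \<bullet> s < b"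
proof -
  obtain T r s where S1: "S1 = insert r T" and S2: "S2 = insert s T" and "r \<notin> T" "s \<notin> T"
    and meet: "convex hull S1 \<inter> convex hull S2 = convex hull T"
    using share_facet_common_facet[OF assms] .
  have indep1: "\<not> affine_dependent S1" and indep2: "\<not> affine_dependent S2"
    and card1: "card S1 = CARD('d) + 1" and card2: "card S2 = CARD('d) + 1"
    using assms(1,2) by (auto simp: d_simplex_of_def)
  have indepT: "\<not> affine_dependent T" using indep1 S1 affine_dependent_subset by blast
  have "finite T" using indepT aff_independent_finite by blast
  have "aff_dim T = int DIM(real^'d) - 1"
    using aff_dim_affine_independent[OF indepT] card1 \<open>finite T\<close> \<open>r \<notin> T\<close> S1 by simp
  then obtain u0 b0 where hull0: "affine hull T = {x. u0 \<bullet> x = b0}"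
    using aff_dim_eq_hyperplane[of T] by auto
  have r_off: "r \<notin> affine hull T"
    using indep1 affine_dependent_choose[OF indepT, of r] \<open>r \<notin> T\<close> S1 by blast
  have s_off: "s \<notin> affine hull T"
    using indep2 affine_dependent_choose[OF indepT, of s] \<open>s \<notin> T\<close> S2 by blast
  obtain u b where hull: "affine hull T = {x. u \<bullet> x = b}" and r: "u \<bullet> r > b"
  proof (cases "u0 \<bullet> r > b0")
    case False
    then have "(- u0) \<bullet> r > - b0" using r_off hull0 by auto
    moreover have "affine hull T = {x. (- u0) \<bullet> x = - b0}" using hull0 by auto
    ultimately show thesis using that by blast
  qed (use hull0 that in blast)
  have T: "\<forall>t\<in>T. u \<bullet> t = b" using hull hull_inc[of _ T] by blast
  have "aff_dim S2 = int DIM(real^'d)" using aff_dim_affine_independent[OF indep2] card2 by simp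
  then have "affine hull (insert s T) = UNIV" using aff_dim_eq_full S2 by blast
  moreover have "convex hull (insert r T) \<inter> convex hull (insert s T) \<subseteq> {x. u \<bullet> x = b}"
    using meet S1 S2 convex_hull_subset_affine_hull hull by blast
  ultimately have "u \<bullet> s \<le> b"
    by (rule opposite_sides_of_common_facet[OF \<open>finite T\<close> \<open>s \<notin> T\<close>]) (use T r in auto)
  moreover have "u \<bullet> s \<noteq> b" using s_off hull by auto
  ultimately show thesis using that[OF S1 S2 T r] by linarith
qed

theorem proposition2p5:
  fixes A :: "(real^'d) set" and S1 S2 :: "(real^'d) set"
  assumes "finite A"
    and "\<forall>a \<in> A. \<forall>i. a $ i \<in> \<int>"
    and "card A \<ge> CARD('d) + 2"
    and "aff_dim (convex hull A) = int CARD('d)"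
    and "d_simplex_of A S1" and "d_simplex_of A S2"
    and "share_facet S1 S2"
  shows "(\<exists>h. S1 \<in> regular_subdivision A h \<and> S2 \<in> regular_subdivision A h)
       \<and> cone_C A S1 S2 \<noteq> {}
       \<and> (\<exists>h. regular_triangulation A h \<and> S1 \<in> regular_subdivision A h \<and> S2 \<in> regular_subdivision A h)"
proof -
  obtain T r s u b where S1: "S1 = insert r T" and S2: "S2 = insert s T"
    and T: "\<forall>t\<in>T. u \<bullet> t = b" and r: "u \<bullet> r > b" and s: "u \<bullet> s < b"
    using share_facet_opposite_sides[OF assms(5-7)] .
  have indep: "\<not> affine_dependent (insert r T)" "\<not> affine_dependent (insert s T)"
    and sub: "insert r T \<subseteq> A" "insert s T \<subseteq> A"
    using assms(5,6) S1 S2 by (auto simp: d_simplex_of_def)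
  have "\<forall>D\<subseteq>insert r (insert s T). affine_dependent D \<longrightarrow> \<not> affine_on D (\<lambda>x. \<bar>u \<bullet> x - b\<bar>)"
    using abs_functional_not_affine_on_dependent[OF indep T] r s by simp
  then obtain h where "\<forall>z\<in>insert r (insert s T). h z = \<bar>u \<bullet> z - b\<bar>"
    and "\<forall>a\<in>A - insert r (insert s T). h a > \<bar>u \<bullet> a - b\<bar>"
    and generic: "\<forall>D\<subseteq>A. affine_dependent D \<longrightarrow> \<not> affine_on D h"
    using exists_perturbation_not_affine_on_dependent[OF \<open>finite A\<close>] by blast
  then have "S1 \<in> regular_subdivision A h" "S2 \<in> regular_subdivision A h"
    unfolding S1 S2 using folded_heights_cells[OF \<open>finite A\<close> sub T r s] by auto
  moreover have "regular_triangulation A h"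
    using generic by (rule regular_triangulation_if_not_affine_on_dependent)
  ultimately show ?thesis unfolding cone_C_def by blast
qed

end
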